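(* Consider the constrained perfect SEIR model described in the context. Along any barrier integral curve $(S,E,I)$ of the admissible set, with nonzero absolutely continuous adjoint $\lambda=(\lambda_1,\lambda_2,\lambda_3)^T$ satisfying $\dot\lambda=\begin{pmatrix}\beta I & -\beta I & 0\\ 0 & \eta & -\eta\\ \beta S & -\beta S & \gamma\end{pmatrix}\lambda$, $\lambda(\bar t)=(0,0,1)^T$, and inputs given by $\bar\beta(t)=\beta_{\max}$ if $\lambda_2-\lambda_1<0$, $\beta_{\min}$ if $\lambda_2-\lambda_1>0$ (arbitrary if $=0$), and $\bar\gamma(t)=\gamma_{\max}$ if $\lambda_3>0$, $\gamma_{\min}$ if $\lambda_3<0$ (arbitrary if $=0$), and whose endpoint $z=(z_1,z_2,z_3)=(S(\bar t),E(\bar t),I(\bar t))$ in the tangent set $\mathcal{T}_{\mathcal{A}}=\{(z_1,z_2,z_3):0\le z_1\le 1-z_2-z_3,\ z_2=\frac{\gamma_{\max}}{\eta}I_{\max},\ z_3=I_{\max}\}$ satisfies $z_1\neq0$, the inputs $\bar\beta$ and $\bar\gamma$ only switch at isolated points in time (i.e. neither $\lambda_2-\lambda_1$ nor $\lambda_3$ vanishes identically on any nonempty open time interval).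
   Context: Perfect SEIR model: fix $\eta>0$, $0<\beta_{\min}\le\beta_{\max}$, $0<\gamma_{\min}\le\gamma_{\max}$, $I_{\max}\in(0,1]$. State $x=(S,E,I)\in\mathbb{R}^3$, inputs Lebesgue measurable $\beta:[t_0,\infty[\to[\beta_{\min},\beta_{\max}]$, $\gamma:[t_0,\infty[\to[\gamma_{\min},\gamma_{\max}]$, dynamics $\dot S=-\beta SI$, $\dot E=\beta SI-\eta E$, $\dot I=\eta E-\gamma I$, written $\dot x=f(x,(\beta,\gamma))$, with constraint $g(x)=I-I_{\max}\le0$. The displayed adjoint equation is $\dot\lambda=-(\partial f/\partial x)^T\lambda$; the input rules come from minimizing the Hamiltonian $\lambda^Tf$ over the input box. A barrier integral curve of the admissible set is a trajectory reaching $\{I=I_{\max}\}$ tangentially at time $\bar t$ whose inputs and adjoint satisfy these conditions. *)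

theory Defs
  imports "HOL-Analysis.Analysis"
begin

definition abs_cont_on :: "real set \<Rightarrow> (real \<Rightarrow> real) \<Rightarrow> bool" where
  "abs_cont_on D f \<longleftrightarrow>
     (\<forall>\<epsilon>>0. \<exists>\<delta>>0. \<forall>(n::nat) (a::nat \<Rightarrow> real) b.
        (\<forall>i<n. a i \<le> b i \<and> a i \<in> D \<and> b i \<in> D) \<and>
        (\<forall>i<n. \<forall>j<n. i \<noteq> j \<longrightarrow> {a i<..<b i} \<inter> {a j<..<b j} = {}) \<and>
        (\<Sum>i<n. b i - a i) < \<delta>
        \<longrightarrow> (\<Sum>i<n. \<bar>f (b i) - f (a i)\<bar>) < \<epsilon>)"

definition tangent_set :: "real \<Rightarrow> real \<Rightarrow> real \<Rightarrow> (real \<times> real \<times> real) set" where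
  "tangent_set \<eta> \<gamma>max Imax =
     {(z1, z2, z3). 0 \<le> z1 \<and> z1 \<le> 1 - z2 - z3 \<and> z2 = \<gamma>max / \<eta> * Imax \<and> z3 = Imax}"

end

theory Submission
  imports Defs
begin

(* Write mu = lam2 - lam1 and nu = lam3 for the two switching functions. If mu vanished on an
   interval, then lam1' = beta I (lam1 - lam2) = 0 there, so lam1 = lam2 = C is constant;
   lam2' = eta (lam2 - lam3) = 0 forces lam3 = C, and lam3' = gamma C = 0 forces C = 0 because
   gamma > 0. The adjoint system is linear with bounded coefficients, so by a Gronwall argument
   a zero of lam propagates forward to tbar, contradicting lam3 tbar = 1. If nu vanished on an
   interval, then lam3' = beta S (lam1 - lam2) = 0 there; S has no zero on [t0, tbar] (again by
   Gronwall, now for S' = - beta I S, since S tbar is nonzero), so mu would vanish on that interval.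
   Only the adjoint equation with its terminal value, the positivity of the inputs and S tbar
   being nonzero are used. Since the trajectories are merely absolutely continuous, Gronwall is proved from the
   fact that an absolutely continuous function with a.e. nonpositive derivative is nonincreasing,
   which is obtained with Cousin's lemma. *)

section \<open>Absolutely continuous functions\<close>

lemma abs_cont_onE:
  assumes "abs_cont_on D f" "e > 0"
  obtains d where "d > 0"
    "\<And>(n::nat) (a::nat \<Rightarrow> real) b. \<forall>i<n. a i \<le> b i \<and> a i \<in> D \<and> b i \<in> D \<Longrightarrow>
       \<forall>i<n. \<forall>j<n. i \<noteq> j \<longrightarrow> {a i<..<b i} \<inter> {a j<..<b j} = {} \<Longrightarrow>
       (\<Sum>i<n. b i - a i) < d \<Longrightarrow> (\<Sum>i<n. \<bar>f (b i) - f (a i)\<bar>) < e"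
proof -
  from assms obtain d where "d > 0" and small: "\<forall>(n::nat) (a::nat \<Rightarrow> real) b.
       (\<forall>i<n. a i \<le> b i \<and> a i \<in> D \<and> b i \<in> D) \<and>
       (\<forall>i<n. \<forall>j<n. i \<noteq> j \<longrightarrow> {a i<..<b i} \<inter> {a j<..<b j} = {}) \<and>
       (\<Sum>i<n. b i - a i) < d \<longrightarrow> (\<Sum>i<n. \<bar>f (b i) - f (a i)\<bar>) < e"
    unfolding abs_cont_on_def by auto
  show thesis
    by (rule that[OF \<open>d > 0\<close>]) (use small in blast)
qed

lemma abs_cont_on_subset: "abs_cont_on D f \<Longrightarrow> E \<subseteq> D \<Longrightarrow> abs_cont_on E f"
  unfolding abs_cont_on_def by (meson subsetD)

lemma abs_cont_on_id: "abs_cont_on D (\<lambda>t. t)"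
  unfolding abs_cont_on_def by (metis (no_types, lifting) abs_of_nonneg diff_ge_0_iff_ge sum.cong lessThan_iff)

lemma abs_cont_on_imp_continuous_on:
  assumes "abs_cont_on D f"
  shows "continuous_on D f"
  unfolding continuous_on_iff
proof (intro ballI allI impI)
  fix x e assume x: "x \<in> D" and e: "(0::real) < e"
  obtain d where "d > 0" and small: "\<And>(n::nat) (a::nat \<Rightarrow> real) b.
       \<forall>i<n. a i \<le> b i \<and> a i \<in> D \<and> b i \<in> D \<Longrightarrow>
       \<forall>i<n. \<forall>j<n. i \<noteq> j \<longrightarrow> {a i<..<b i} \<inter> {a j<..<b j} = {} \<Longrightarrow>
       (\<Sum>i<n. b i - a i) < d \<Longrightarrow> (\<Sum>i<n. \<bar>f (b i) - f (a i)\<bar>) < e"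
    using abs_cont_onE[OF assms e] by blast
  have "dist (f y) (f x) < e" if "y \<in> D" "dist y x < d" for y
    using small[of 1 "\<lambda>_. min x y" "\<lambda>_. max x y"] x that
    by (cases "x \<le> y") (auto simp: dist_real_def abs_minus_commute)
  then show "\<exists>d>0. \<forall>y\<in>D. dist y x < d \<longrightarrow> dist (f y) (f x) < e"
    using \<open>d > 0\<close> by blast
qed

lemma abs_cont_on_increment_le:
  assumes f: "abs_cont_on D f" and g: "abs_cont_on D g" and "M > 0"
    and incr: "\<And>x y. x \<in> D \<Longrightarrow> y \<in> D \<Longrightarrow> \<bar>h y - h x\<bar> \<le> M * (\<bar>f y - f x\<bar> + \<bar>g y - g x\<bar>)"
  shows "abs_cont_on D h"
  unfolding abs_cont_on_def
proof (intro allI impI)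
  fix e :: real assume "e > 0"
  then have e': "e / (2 * M) > 0" using \<open>M > 0\<close> by simp
  obtain d1 where "d1 > 0" and small1: "\<And>(n::nat) (a::nat \<Rightarrow> real) b.
       \<forall>i<n. a i \<le> b i \<and> a i \<in> D \<and> b i \<in> D \<Longrightarrow>
       \<forall>i<n. \<forall>j<n. i \<noteq> j \<longrightarrow> {a i<..<b i} \<inter> {a j<..<b j} = {} \<Longrightarrow>
       (\<Sum>i<n. b i - a i) < d1 \<Longrightarrow> (\<Sum>i<n. \<bar>f (b i) - f (a i)\<bar>) < e / (2 * M)"
    using abs_cont_onE[OF f e'] by blast
  obtain d2 where "d2 > 0" and small2: "\<And>(n::nat) (a::nat \<Rightarrow> real) b.
       \<forall>i<n. a i \<le> b i \<and> a i \<in> D \<and> b i \<in> D \<Longrightarrow>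
       \<forall>i<n. \<forall>j<n. i \<noteq> j \<longrightarrow> {a i<..<b i} \<inter> {a j<..<b j} = {} \<Longrightarrow>
       (\<Sum>i<n. b i - a i) < d2 \<Longrightarrow> (\<Sum>i<n. \<bar>g (b i) - g (a i)\<bar>) < e / (2 * M)"
    using abs_cont_onE[OF g e'] by blast
  have main: "(\<Sum>i<n. \<bar>h (b i) - h (a i)\<bar>) < e"
    if ab: "\<forall>i<n. a i \<le> b i \<and> a i \<in> D \<and> b i \<in> D"
      and disj: "\<forall>i<n. \<forall>j<n. i \<noteq> j \<longrightarrow> {a i<..<b i} \<inter> {a j<..<b j} = {}"
      and len: "(\<Sum>i<n. b i - a i) < min d1 d2" for n and a b :: "nat \<Rightarrow> real"
  proof -
    have "(\<Sum>i<n. \<bar>h (b i) - h (a i)\<bar>)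
        \<le> M * ((\<Sum>i<n. \<bar>f (b i) - f (a i)\<bar>) + (\<Sum>i<n. \<bar>g (b i) - g (a i)\<bar>))"
      unfolding sum.distrib[symmetric] sum_distrib_left using ab by (intro sum_mono incr) auto
    also have "\<dots> < M * (e / (2 * M) + e / (2 * M))"
      using small1[OF ab disj] small2[OF ab disj] len \<open>M > 0\<close> by (intro mult_strict_left_mono) auto
    also have "\<dots> = e" using \<open>M > 0\<close> by (simp add: field_simps)
    finally show ?thesis .
  qed
  show "\<exists>\<delta>>0. \<forall>(n::nat) (a::nat \<Rightarrow> real) b. (\<forall>i<n. a i \<le> b i \<and> a i \<in> D \<and> b i \<in> D) \<and>
      (\<forall>i<n. \<forall>j<n. i \<noteq> j \<longrightarrow> {a i<..<b i} \<inter> {a j<..<b j} = {}) \<and> (\<Sum>i<n. b i - a i) < \<delta> \<longrightarrow>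
      (\<Sum>i<n. \<bar>h (b i) - h (a i)\<bar>) < e"
  proof (intro exI[of _ "min d1 d2"] conjI allI impI)
    show "0 < min d1 d2" using \<open>d1 > 0\<close> \<open>d2 > 0\<close> by simp
    fix n :: nat and a b :: "nat \<Rightarrow> real"
    assume "(\<forall>i<n. a i \<le> b i \<and> a i \<in> D \<and> b i \<in> D) \<and>
      (\<forall>i<n. \<forall>j<n. i \<noteq> j \<longrightarrow> {a i<..<b i} \<inter> {a j<..<b j} = {}) \<and>
      (\<Sum>i<n. b i - a i) < min d1 d2"
    then show "(\<Sum>i<n. \<bar>h (b i) - h (a i)\<bar>) < e"
      by (elim conjE) (rule main; assumption)
  qed
qed

lemma lipschitz_on_imp_abs_cont_on:
  assumes "L-lipschitz_on D f"
  shows "abs_cont_on D f"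
proof (rule abs_cont_on_increment_le[OF abs_cont_on_id abs_cont_on_id])
  show "\<bar>L\<bar> + 1 > 0" by simp
  fix x y assume "x \<in> D" "y \<in> D"
  then have "\<bar>f y - f x\<bar> \<le> L * \<bar>y - x\<bar>"
    using lipschitz_onD[OF assms] by (simp add: dist_real_def)
  also have "\<dots> \<le> (\<bar>L\<bar> + 1) * (\<bar>y - x\<bar> + \<bar>y - x\<bar>)"
    by (intro mult_mono) auto
  finally show "\<bar>f y - f x\<bar> \<le> (\<bar>L\<bar> + 1) * (\<bar>y - x\<bar> + \<bar>y - x\<bar>)" .
qed

lemma abs_cont_on_C1:
  assumes deriv: "\<And>t. t \<in> {c..d} \<Longrightarrow> (f has_real_derivative f' t) (at t within {c..d})"
    and cont: "continuous_on {c..d} f'"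
  shows "abs_cont_on {c..d} f"
proof -
  obtain B where "B \<ge> 0" and B: "\<And>t. t \<in> {c..d} \<Longrightarrow> norm (f' t) \<le> B"
    using continuous_on_compact_bound[OF compact_Icc cont] by metis
  have "B-lipschitz_on {c..d} f"
    using field_differentiable_bound[OF convex_real_interval(5) deriv B] \<open>B \<ge> 0\<close>
    by (intro lipschitz_onI) (auto simp: dist_norm)
  then show ?thesis by (rule lipschitz_on_imp_abs_cont_on)
qed

lemma abs_cont_on_add:
  assumes "abs_cont_on D f" "abs_cont_on D g"
  shows "abs_cont_on D (\<lambda>t. f t + g t)"
  by (rule abs_cont_on_increment_le[OF assms, where M = 1]) auto

lemma abs_cont_on_minus:
  assumes "abs_cont_on D f"
  shows "abs_cont_on D (\<lambda>t. - f t)"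
  by (rule abs_cont_on_increment_le[OF assms assms, where M = 1]) (auto simp: abs_minus_commute)

lemma abs_cont_on_mult:
  assumes f: "abs_cont_on D f" and g: "abs_cont_on D g" and "compact D"
  shows "abs_cont_on D (\<lambda>t. f t * g t)"
proof -
  obtain Bf where Bf: "\<And>x. x \<in> D \<Longrightarrow> \<bar>f x\<bar> \<le> Bf"
    using continuous_on_compact_bound[OF \<open>compact D\<close> abs_cont_on_imp_continuous_on[OF f]] by auto
  obtain Bg where Bg: "\<And>x. x \<in> D \<Longrightarrow> \<bar>g x\<bar> \<le> Bg"
    using continuous_on_compact_bound[OF \<open>compact D\<close> abs_cont_on_imp_continuous_on[OF g]] by auto
  show ?thesis
  proof (rule abs_cont_on_increment_le[OF f g, where M = "\<bar>Bf\<bar> + \<bar>Bg\<bar> + 1"])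
    fix x y assume "x \<in> D" "y \<in> D"
    have "\<bar>f y * g y - f x * g x\<bar> = \<bar>f y * (g y - g x) + g x * (f y - f x)\<bar>"
      by (simp add: algebra_simps)
    also have "\<dots> \<le> \<bar>f y\<bar> * \<bar>g y - g x\<bar> + \<bar>g x\<bar> * \<bar>f y - f x\<bar>"
      by (metis abs_mult abs_triangle_ineq)
    also have "\<dots> \<le> (\<bar>Bf\<bar> + \<bar>Bg\<bar> + 1) * \<bar>g y - g x\<bar> + (\<bar>Bf\<bar> + \<bar>Bg\<bar> + 1) * \<bar>f y - f x\<bar>"
      using Bf[OF \<open>y \<in> D\<close>] Bg[OF \<open>x \<in> D\<close>] by (intro add_mono mult_right_mono) auto
    finally show "\<bar>f y * g y - f x * g x\<bar> \<le> (\<bar>Bf\<bar> + \<bar>Bg\<bar> + 1) * (\<bar>f y - f x\<bar> + \<bar>g y - g x\<bar>)"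
      by (simp add: algebra_simps)
  qed simp
qed

section \<open>Absolutely continuous functions with nonpositive derivative\<close>

lemma abs_cont_on_tagged_partial_division:
  assumes "abs_cont_on {c..d} f" "e > 0"
  obtains \<delta> where "\<delta> > 0"
    "\<And>q. q tagged_partial_division_of {c..d} \<Longrightarrow> (\<Sum>(x, K)\<in>q. measure lborel K) < \<delta> \<Longrightarrow>
       (\<Sum>(x, K)\<in>q. \<bar>f (Sup K) - f (Inf K)\<bar>) < e"
proof -
  obtain \<delta> where "\<delta> > 0" and small: "\<And>(n::nat) (a::nat \<Rightarrow> real) b.
       \<forall>i<n. a i \<le> b i \<and> a i \<in> {c..d} \<and> b i \<in> {c..d} \<Longrightarrow>
       \<forall>i<n. \<forall>j<n. i \<noteq> j \<longrightarrow> {a i<..<b i} \<inter> {a j<..<b j} = {} \<Longrightarrow>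
       (\<Sum>i<n. b i - a i) < \<delta> \<Longrightarrow> (\<Sum>i<n. \<bar>f (b i) - f (a i)\<bar>) < e"
    using abs_cont_onE[OF assms] by blast
  have "(\<Sum>(x, K)\<in>q. \<bar>f (Sup K) - f (Inf K)\<bar>) < e"
    if q: "q tagged_partial_division_of {c..d}" and len: "(\<Sum>(x, K)\<in>q. measure lborel K) < \<delta>" for q
  proof -
    obtain h where h: "bij_betw h {..<card q} q"
      using ex_bij_betw_nat_finite[OF tagged_partial_division_ofD(1)[OF q]] by (auto simp: atLeast0LessThan)
    define a where "a i = Inf (snd (h i))" for i
    define b where "b i = Sup (snd (h i))" for i
    have hq: "h i \<in> q" if "i < card q" for i
      using h that by (auto simp: bij_betw_def)
    have K: "snd (h i) = {a i..b i} \<and> a i \<le> b i \<and> c \<le> a i \<and> b i \<le> d" if "i < card q" for i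
    proof -
      obtain x K where xK: "h i = (x, K)" by fastforce
      then have "(x, K) \<in> q" using hq[OF that] by simp
      from tagged_partial_division_ofD(2-4)[OF q this] obtain u v where "K = {u..v}" "x \<in> K" "K \<subseteq> {c..d}"
        by auto
      then show ?thesis unfolding a_def b_def xK by auto
    qed
    have disj: "{a i<..<b i} \<inter> {a j<..<b j} = {}" if "i < card q" "j < card q" "i \<noteq> j" for i j
    proof -
      have "h i \<noteq> h j" using h that by (auto simp: bij_betw_def inj_on_def)
      then have "interior (snd (h i)) \<inter> interior (snd (h j)) = {}"
        using tagged_partial_division_ofD(5)[OF q, of "fst (h i)" "snd (h i)" "fst (h j)" "snd (h j)"]
          hq that by auto
      then show ?thesis using K that by simp
    qed
    have reindex: "(\<Sum>(x, K)\<in>q. F K) = (\<Sum>i<card q. F {a i..b i})" for F :: "real set \<Rightarrow> real"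
      using sum.reindex_bij_betw[OF h, of "\<lambda>(x, K). F K"] K by (auto simp: case_prod_beta)
    have ab: "\<forall>i<card q. a i \<le> b i \<and> a i \<in> {c..d} \<and> b i \<in> {c..d}"
      using K by fastforce
    have "(\<Sum>i<card q. \<bar>f (b i) - f (a i)\<bar>) < e"
      by (rule small[OF ab]) (use disj len K in \<open>auto simp: reindex\<close>)
    then show ?thesis using K by (simp add: reindex)
  qed
  with \<open>\<delta> > 0\<close> show thesis using that by blast
qed

lemma tagged_partial_division_content_le_measure:
  assumes q: "q tagged_partial_division_of S" and "\<And>x K. (x, K) \<in> q \<Longrightarrow> K \<subseteq> G" and "G \<in> lmeasurable"
  shows "(\<Sum>(x, K)\<in>q. measure lborel K) \<le> measure lebesgue G"
proof -
  have tdiv: "q tagged_division_of \<Union>(snd ` q)"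
    by (rule tagged_partial_division_of_Union_self[OF q])
  have "(\<Sum>(x, K)\<in>q. measure lborel K) = (\<Sum>K\<in>snd ` q. measure lborel K)"
    by (rule sum.over_tagged_division_lemma[OF tdiv]) (simp add: content_eq_0_interior)
  also have "\<dots> = (\<Sum>K\<in>snd ` q. measure lebesgue K)"
    using tagged_division_ofD(4)[OF tdiv] by (intro sum.cong) force+
  also have "\<dots> = measure lebesgue (\<Union>(snd ` q))"
    by (rule content_division[OF division_of_tagged_division[OF tdiv]])
  also have "\<dots> \<le> measure lebesgue G"
  proof (rule measure_mono_fmeasurable)
    show "\<Union>(snd ` q) \<subseteq> G" using assms(2) by force
  qed (use assms(3) lmeasurable_division[OF division_of_tagged_division[OF tdiv]] in auto)
  finally show ?thesis .
qed

lemma AE_lebesgue_small_open_exception: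
  assumes "AE x in lebesgue. P x" "\<delta> > 0"
  obtains G where "open G" "{x. \<not> P x} \<subseteq> G" "G \<in> lmeasurable" "measure lebesgue G < \<delta>"
proof -
  obtain N where N: "{x \<in> space lebesgue. \<not> P x} \<subseteq> N" "emeasure lebesgue N = 0" "N \<in> sets lebesgue"
    using AE_E[OF assms(1)] by blast
  obtain G where G: "open G" "N \<subseteq> G" "G - N \<in> lmeasurable" "emeasure lebesgue (G - N) < ennreal \<delta>"
    using sets_lebesgue_outer_open[OF N(3) assms(2)] by blast
  have "emeasure lebesgue G \<le> emeasure lebesgue N + emeasure lebesgue (G - N)"
    using G(2) N(3) G(3) emeasure_subadditive[of N lebesgue "G - N"] by (simp add: Un_absorb1 fmeasurableD)
  also have "\<dots> < ennreal \<delta>" using N(2) G(4) by simp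
  finally have G\<delta>: "emeasure lebesgue G < ennreal \<delta>" .
  then have "G \<in> lmeasurable"
    using G(1) by (auto simp: fmeasurable_def less_top[symmetric] intro: order.strict_trans)
  moreover have "measure lebesgue G < \<delta>"
    using G\<delta> \<open>G \<in> lmeasurable\<close> \<open>\<delta> > 0\<close> by (simp add: emeasure_eq_measure2 ennreal_less_iff)
  ultimately show thesis using that G N(1) by auto
qed

lemma has_real_derivative_nonpos_straddle:
  assumes "(g has_real_derivative D) (at t within S)" "D \<le> 0" "e > 0"
  obtains r where "r > 0"
    "\<And>u v. u \<in> S \<Longrightarrow> v \<in> S \<Longrightarrow> u \<le> t \<Longrightarrow> t \<le> v \<Longrightarrow> \<bar>u - t\<bar> < r \<Longrightarrow> \<bar>v - t\<bar> < r \<Longrightarrow>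
       g v - g u \<le> e * (v - u)"
proof -
  obtain r where "r > 0" and r: "\<And>y. y \<in> S \<Longrightarrow> \<bar>y - t\<bar> < r \<Longrightarrow> \<bar>g y - g t - D * (y - t)\<bar> \<le> e * \<bar>y - t\<bar>"
    using assms(1,3) unfolding has_field_derivative_def has_derivative_within_alt by fastforce
  have "g v - g u \<le> e * (v - u)"
    if "u \<in> S" "v \<in> S" "u \<le> t" "t \<le> v" "\<bar>u - t\<bar> < r" "\<bar>v - t\<bar> < r" for u v
  proof -
    have "g v - g t \<le> e * (v - t)"
      using r[of v] that assms(2) mult_nonpos_nonneg[of D "v - t"] by (auto simp: abs_le_iff)
    moreover have "g t - g u \<le> e * (t - u)"
      using r[of u] that assms(2) mult_nonpos_nonpos[of D "u - t"] by (auto simp: abs_le_iff)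
    ultimately show ?thesis by (simp add: algebra_simps)
  qed
  with \<open>r > 0\<close> show thesis using that by blast
qed

lemma nonpos_derivative_straddle_gauge:
  assumes "open G" "e > 0"
    and deriv: "\<And>t. t \<in> S - G \<Longrightarrow> (g has_real_derivative g' t) (at t within S) \<and> g' t \<le> 0"
  obtains r where "\<And>t. r t > 0" "\<And>t. t \<in> G \<Longrightarrow> ball t (r t) \<subseteq> G"
    "\<And>t u v. t \<in> S - G \<Longrightarrow> u \<in> S \<Longrightarrow> v \<in> S \<Longrightarrow> u \<le> t \<Longrightarrow> t \<le> v \<Longrightarrow>
       \<bar>u - t\<bar> < r t \<Longrightarrow> \<bar>v - t\<bar> < r t \<Longrightarrow> g v - g u \<le> e * (v - u)"
proof -
  define P where "P t r \<longleftrightarrow> r > 0 \<and> (t \<in> G \<longrightarrow> ball t r \<subseteq> G) \<and> (t \<in> S - G \<longrightarrow>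
      (\<forall>u\<in>S. \<forall>v\<in>S. u \<le> t \<longrightarrow> t \<le> v \<longrightarrow> \<bar>u - t\<bar> < r \<longrightarrow> \<bar>v - t\<bar> < r \<longrightarrow>
         g v - g u \<le> e * (v - u)))" for t r
  have "\<forall>t. \<exists>r. P t r"
  proof
    fix t
    show "\<exists>r. P t r"
    proof (cases "t \<in> G")
      case True
      then obtain r where "r > 0" "ball t r \<subseteq> G" using \<open>open G\<close> open_contains_ball by blast
      with True show ?thesis unfolding P_def by blast
    next
      case False
      show ?thesis
      proof (cases "t \<in> S")
        case True
        have "(g has_real_derivative g' t) (at t within S)" "g' t \<le> 0"
          using deriv[of t] True False by auto
        then obtain r where "r > 0" and "\<And>u v. u \<in> S \<Longrightarrow> v \<in> S \<Longrightarrow> u \<le> t \<Longrightarrow> t \<le> v \<Longrightarrow>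
            \<bar>u - t\<bar> < r \<Longrightarrow> \<bar>v - t\<bar> < r \<Longrightarrow> g v - g u \<le> e * (v - u)"
          using has_real_derivative_nonpos_straddle \<open>e > 0\<close> by metis
        with False show ?thesis unfolding P_def by blast
      qed (use False in \<open>auto simp: P_def intro: exI[of _ 1]\<close>)
    qed
  qed
  then obtain r where r: "\<And>t. P t (r t)" using choice by metis
  show thesis
  proof (rule that)
    show "r t > 0" for t using r[of t] by (simp add: P_def)
    show "ball t (r t) \<subseteq> G" if "t \<in> G" for t using r[of t] that by (simp add: P_def)
    show "g v - g u \<le> e * (v - u)"
      if "t \<in> S - G" "u \<in> S" "v \<in> S" "u \<le> t" "t \<le> v" "\<bar>u - t\<bar> < r t" "\<bar>v - t\<bar> < r t" for t u v
      using r[of t] that unfolding P_def by blast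
  qed
qed

lemma tagged_division_straddle_sum_le:
  assumes p: "p tagged_division_of {c..d}" and "c \<le> d" "\<epsilon> \<ge> 0"
    and fine: "(\<lambda>t. ball t (r t)) fine p"
    and straddle: "\<And>t u v. t \<in> {c..d} - G \<Longrightarrow> u \<in> {c..d} \<Longrightarrow> v \<in> {c..d} \<Longrightarrow> u \<le> t \<Longrightarrow> t \<le> v \<Longrightarrow>
        \<bar>u - t\<bar> < r t \<Longrightarrow> \<bar>v - t\<bar> < r t \<Longrightarrow> g v - g u \<le> \<epsilon> * (v - u)"
  shows "g d - g c \<le> (\<Sum>(x, K)\<in>{xK \<in> p. fst xK \<in> G}. \<bar>g (Sup K) - g (Inf K)\<bar>) + \<epsilon> * (d - c)"
proof -
  have tag_bound: "g (Sup K) - g (Inf K) \<le> (if x \<in> G then \<bar>g (Sup K) - g (Inf K)\<bar> else 0) + \<epsilon> * measure lborel K"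
    if xK: "(x, K) \<in> p" for x K
  proof -
    obtain u v where K: "K = {u..v}" "u \<le> x" "x \<le> v" "{u..v} \<subseteq> {c..d}"
      using tagged_division_ofD(2-4)[OF p xK] by fastforce
    have "{u..v} \<subseteq> ball x (r x)" using fine xK K(1) unfolding fine_def by blast
    moreover have "u \<in> {u..v}" "v \<in> {u..v}" using K(2,3) by auto
    ultimately have "u \<in> ball x (r x)" "v \<in> ball x (r x)" by blast+
    then have "\<bar>u - x\<bar> < r x" "\<bar>v - x\<bar> < r x" by (auto simp: dist_real_def abs_minus_commute)
    moreover have "u \<in> {c..d}" "v \<in> {c..d}" "x \<in> {c..d}" using K by auto
    ultimately have outside: "x \<notin> G \<Longrightarrow> g v - g u \<le> \<epsilon> * (v - u)"
      using straddle[of x u v] K(2,3) by blast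
    have "Sup K = v" "Inf K = u" "measure lborel K = v - u" using K(1-3) by auto
    moreover have "0 \<le> \<epsilon> * (v - u)" using \<open>\<epsilon> \<ge> 0\<close> K(2,3) by simp
    ultimately show ?thesis using outside abs_ge_self[of "g v - g u"] by auto
  qed
  have bad_sum: "(\<Sum>(x, K)\<in>p. if x \<in> G then \<bar>g (Sup K) - g (Inf K)\<bar> else 0)
      = (\<Sum>(x, K)\<in>{xK \<in> p. fst xK \<in> G}. \<bar>g (Sup K) - g (Inf K)\<bar>)"
    by (simp add: sum.inter_filter[OF tagged_division_of_finite[OF p]] case_prod_beta)
  have total: "(\<Sum>(x, K)\<in>p. measure lborel K) = d - c"
    using additive_content_tagged_division[OF p[folded cbox_interval]] \<open>c \<le> d\<close> by simp
  have "g d - g c = (\<Sum>(x, K)\<in>p. g (Sup K) - g (Inf K))"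
    by (rule additive_tagged_division_1[OF \<open>c \<le> d\<close> p, symmetric])
  also have "\<dots> \<le> (\<Sum>(x, K)\<in>p. (if x \<in> G then \<bar>g (Sup K) - g (Inf K)\<bar> else 0) + \<epsilon> * measure lborel K)"
    using tag_bound by (intro sum_mono) auto
  also have "\<dots> = (\<Sum>(x, K)\<in>{xK \<in> p. fst xK \<in> G}. \<bar>g (Sup K) - g (Inf K)\<bar>) + \<epsilon> * (d - c)"
    unfolding bad_sum[symmetric] total[symmetric]
    by (simp add: sum.distrib sum_distrib_left case_prod_beta)
  finally show ?thesis .
qed

lemma abs_cont_on_deriv_nonpos_imp_le:
  assumes "c \<le> d" and ac: "abs_cont_on {c..d} g"
    and deriv: "AE t in lebesgue. t \<in> {c..d} \<longrightarrow>
      (g has_real_derivative g' t) (at t within {c..d}) \<and> g' t \<le> 0"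
  shows "g d \<le> g c"
proof (rule field_le_epsilon)
  fix e :: real assume "e > 0"
  define \<epsilon> where "\<epsilon> = e / (d - c + 1)"
  have "\<epsilon> > 0" using \<open>e > 0\<close> \<open>c \<le> d\<close> by (simp add: \<epsilon>_def)
  obtain \<delta> where "\<delta> > 0" and small: "\<And>q. q tagged_partial_division_of {c..d} \<Longrightarrow>
      (\<Sum>(x, K)\<in>q. measure lborel K) < \<delta> \<Longrightarrow> (\<Sum>(x, K)\<in>q. \<bar>g (Sup K) - g (Inf K)\<bar>) < \<epsilon>"
    using abs_cont_on_tagged_partial_division[OF ac \<open>\<epsilon> > 0\<close>] by blast
  obtain G where "open G" and exception: "{t. \<not> (t \<in> {c..d} \<longrightarrow>
      (g has_real_derivative g' t) (at t within {c..d}) \<and> g' t \<le> 0)} \<subseteq> G"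
    and "G \<in> lmeasurable" "measure lebesgue G < \<delta>"
    using AE_lebesgue_small_open_exception[OF deriv \<open>\<delta> > 0\<close>] by blast
  have good: "(g has_real_derivative g' t) (at t within {c..d}) \<and> g' t \<le> 0" if "t \<in> {c..d} - G" for t
    using exception that by blast
  obtain r where r: "\<And>t. r t > 0" and rG: "\<And>t. t \<in> G \<Longrightarrow> ball t (r t) \<subseteq> G"
    and straddle: "\<And>t u v. t \<in> {c..d} - G \<Longrightarrow> u \<in> {c..d} \<Longrightarrow> v \<in> {c..d} \<Longrightarrow> u \<le> t \<Longrightarrow> t \<le> v \<Longrightarrow>
        \<bar>u - t\<bar> < r t \<Longrightarrow> \<bar>v - t\<bar> < r t \<Longrightarrow> g v - g u \<le> \<epsilon> * (v - u)"
    using nonpos_derivative_straddle_gauge[OF \<open>open G\<close> \<open>\<epsilon> > 0\<close> good] by blast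
  have "gauge (\<lambda>t. ball t (r t))" using r by (intro gauge_ball_dependent) auto
  then obtain p where p: "p tagged_division_of {c..d}" and fine: "(\<lambda>t. ball t (r t)) fine p"
    using fine_division_exists_real by blast
  have "g d - g c \<le> (\<Sum>(x, K)\<in>{xK \<in> p. fst xK \<in> G}. \<bar>g (Sup K) - g (Inf K)\<bar>) + \<epsilon> * (d - c)"
    by (rule tagged_division_straddle_sum_le[OF p \<open>c \<le> d\<close> less_imp_le[OF \<open>\<epsilon> > 0\<close>] fine straddle])
  also have "\<dots> < \<epsilon> + \<epsilon> * (d - c)"
  proof -
    let ?bad = "{xK \<in> p. fst xK \<in> G}"
    have bad_div: "?bad tagged_partial_division_of {c..d}"
      using p tagged_partial_division_subset[of p "{c..d}" ?bad]
      by (auto simp: tagged_division_of_def)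
    have bad_in_G: "K \<subseteq> G" if "(x, K) \<in> ?bad" for x K
      using that fine rG unfolding fine_def by fastforce
    have "(\<Sum>(x, K)\<in>?bad. measure lborel K) \<le> measure lebesgue G"
      by (rule tagged_partial_division_content_le_measure[OF bad_div bad_in_G \<open>G \<in> lmeasurable\<close>])
    then show ?thesis
      using small[OF bad_div] \<open>measure lebesgue G < \<delta>\<close> by simp
  qed
  also have "\<dots> = \<epsilon> * (d - c + 1)" by (simp add: algebra_simps)
  also have "\<dots> = e" using \<open>c \<le> d\<close> by (simp add: \<epsilon>_def)
  finally show "g d \<le> g c + e" by simp
qed

lemma abs_cont_on_deriv_zero_imp_eq:
  assumes ac: "abs_cont_on S f" and sub: "{a<..<b} \<subseteq> S"
    and deriv: "AE t in lebesgue. t \<in> {a<..<b} \<longrightarrow> (f has_real_derivative 0) (at t within S)"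
    and "x \<in> {a<..<b}" "y \<in> {a<..<b}"
  shows "f x = f y"
proof -
  have "f v \<le> f u \<and> - f v \<le> - f u" if uv: "u \<in> {a<..<b}" "v \<in> {a<..<b}" "u \<le> v" for u v
  proof -
    have uvS: "{u..v} \<subseteq> S" using uv sub by auto
    have acuv: "abs_cont_on {u..v} f" by (rule abs_cont_on_subset[OF ac uvS])
    have d0: "AE t in lebesgue. t \<in> {u..v} \<longrightarrow>
        (f has_real_derivative 0) (at t within {u..v}) \<and> (0::real) \<le> 0"
      using deriv by eventually_elim (use uv uvS in \<open>auto intro: DERIV_subset\<close>)
    then have d0': "AE t in lebesgue. t \<in> {u..v} \<longrightarrow>
        ((\<lambda>t. - f t) has_real_derivative 0) (at t within {u..v}) \<and> (0::real) \<le> 0"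
      by eventually_elim (auto dest: DERIV_minus)
    show ?thesis
      using abs_cont_on_deriv_nonpos_imp_le[OF \<open>u \<le> v\<close> acuv d0]
        abs_cont_on_deriv_nonpos_imp_le[OF \<open>u \<le> v\<close> abs_cont_on_minus[OF acuv] d0'] by simp
  qed
  from this[of x y] this[of y x] assms(4,5) show ?thesis by (cases "x \<le> y") auto
qed

lemma has_real_derivative_locally_constant:
  assumes "(f has_real_derivative D) (at t within S)" "open U" "t \<in> U" "U \<subseteq> S"
    and const: "\<And>y. y \<in> U \<Longrightarrow> f y = f t"
  shows "D = 0"
proof -
  have "t \<in> interior S" by (rule subsetD[OF interior_maximal[OF assms(4,2)] assms(3)])
  have "(f has_real_derivative D) (at t)"
    using assms(1) unfolding at_within_interior[OF \<open>t \<in> interior S\<close>] .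
  moreover have "((\<lambda>_. f t) has_real_derivative 0) (at t)" by simp
  then have "(f has_real_derivative 0) (at t)"
    by (rule has_field_derivative_transform_within_open[OF _ \<open>open U\<close> \<open>t \<in> U\<close>]) (simp add: const)
  ultimately show ?thesis by (rule DERIV_unique)
qed

lemma AE_lebesgue_open_imp_ex:
  assumes "open U" "U \<noteq> {}" "AE x in lebesgue. x \<in> U \<longrightarrow> P x"
  shows "\<exists>x\<in>U. P x"
proof (rule ccontr)
  assume none: "\<not> (\<exists>x\<in>U. P x)"
  from assms(3) have "AE x in lebesgue. x \<in> U \<longrightarrow> x \<in> {}"
    by eventually_elim (use none in auto)
  with assms(1,2) show False using mem_closed_if_AE_lebesgue_open[of U "{}"] by blast
qed

lemma continuous_on_AE_eq_imp_eq:
  fixes f g :: "'a::euclidean_space \<Rightarrow> real"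
  assumes "open U" "continuous_on U f" "continuous_on U g"
    and "AE x in lebesgue. x \<in> U \<longrightarrow> f x = g x" "x \<in> U"
  shows "f x = g x"
proof (rule ccontr)
  let ?V = "U \<inter> (\<lambda>x. f x - g x) -` (- {0})"
  assume "f x \<noteq> g x"
  have "open ?V"
    by (intro continuous_open_preimage continuous_on_diff assms(1-3)) auto
  moreover have "?V \<noteq> {}" using \<open>f x \<noteq> g x\<close> assms(5) by auto
  moreover have "AE y in lebesgue. y \<in> ?V \<longrightarrow> f y = g y" using assms(4) by eventually_elim auto
  ultimately have "\<exists>y\<in>?V. f y = g y" by (rule AE_lebesgue_open_imp_ex)
  then show False by auto
qed

section \<open>Forward propagation of zeros\<close>

lemma gronwall_zero:
  assumes "c \<in> {t0..t1}" and ac: "abs_cont_on {t0..t1} V"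
    and deriv: "AE t in lebesgue. t \<in> {t0..t1} \<longrightarrow>
      (V has_real_derivative V' t) (at t within {t0..t1}) \<and> V' t \<le> K * V t"
    and "V c = 0"
  shows "V t1 \<le> 0"
proof -
  define W where "W t = exp (- K * t) * V t" for t
  have sub: "{c..t1} \<subseteq> {t0..t1}" using \<open>c \<in> {t0..t1}\<close> by auto
  have exp_deriv: "((\<lambda>t. exp (- K * t)) has_real_derivative exp (- K * t) * (- K)) (at t within S)"
    for t S by (auto intro!: derivative_eq_intros)
  have "abs_cont_on {c..t1} (\<lambda>t. exp (- K * t))"
    by (rule abs_cont_on_C1[OF exp_deriv]) (intro continuous_intros)
  then have acW: "abs_cont_on {c..t1} W"
    unfolding W_def using abs_cont_on_subset[OF ac sub] by (intro abs_cont_on_mult) auto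
  have "AE t in lebesgue. t \<in> {c..t1} \<longrightarrow>
      (W has_real_derivative exp (- K * t) * (V' t - K * V t)) (at t within {c..t1})
      \<and> exp (- K * t) * (V' t - K * V t) \<le> 0"
    using deriv
  proof eventually_elim
    case (elim t)
    show ?case
    proof
      assume "t \<in> {c..t1}"
      with elim sub have V': "(V has_real_derivative V' t) (at t within {c..t1})" "V' t \<le> K * V t"
        by (auto intro: DERIV_subset)
      have "(W has_real_derivative exp (- K * t) * (- K) * V t + V' t * exp (- K * t)) (at t within {c..t1})"
        unfolding W_def by (rule DERIV_mult[OF exp_deriv V'(1)])
      then show "(W has_real_derivative exp (- K * t) * (V' t - K * V t)) (at t within {c..t1})
          \<and> exp (- K * t) * (V' t - K * V t) \<le> 0"
        using V'(2) by (auto simp: algebra_simps mult_le_0_iff elim: DERIV_cong)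
    qed
  qed
  then have "W t1 \<le> W c"
    using \<open>c \<in> {t0..t1}\<close> by (intro abs_cont_on_deriv_nonpos_imp_le[OF _ acW]) auto
  then show ?thesis using \<open>V c = 0\<close> by (simp add: W_def mult_le_0_iff)
qed

lemma abs_cont_on_linear_bound_zero:
  assumes "c \<in> {t0..t1}" and ac: "abs_cont_on {t0..t1} x"
    and deriv: "AE t in lebesgue. t \<in> {t0..t1} \<longrightarrow> (x has_real_derivative x' t) (at t within {t0..t1})"
    and bound: "\<And>t. t \<in> {t0..t1} \<Longrightarrow> \<bar>x' t\<bar> \<le> M * \<bar>x t\<bar>"
    and "x c = 0"
  shows "x t1 = 0"
proof -
  have "AE t in lebesgue. t \<in> {t0..t1} \<longrightarrow>
      ((\<lambda>t. x t * x t) has_real_derivative x t * x' t + x' t * x t) (at t within {t0..t1})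
      \<and> x t * x' t + x' t * x t \<le> (2 * M) * (x t * x t)"
    using deriv
  proof eventually_elim
    case (elim t)
    show ?case
    proof
      assume t: "t \<in> {t0..t1}"
      have d: "(x has_real_derivative x' t) (at t within {t0..t1})" using elim t by auto
      have "x t * x' t \<le> \<bar>x t\<bar> * \<bar>x' t\<bar>" by (metis abs_ge_self abs_mult)
      also have "\<dots> \<le> \<bar>x t\<bar> * (M * \<bar>x t\<bar>)" using bound[OF t] by (simp add: mult_left_mono)
      also have "\<dots> = M * (x t * x t)" by (simp add: abs_mult_self_eq)
      finally have "x t * x' t \<le> M * (x t * x t)" .
      then show "((\<lambda>t. x t * x t) has_real_derivative x t * x' t + x' t * x t) (at t within {t0..t1})
          \<and> x t * x' t + x' t * x t \<le> (2 * M) * (x t * x t)"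
        using DERIV_mult'[OF d d] mult.commute[of "x' t" "x t"] by simp
    qed
  qed
  from gronwall_zero[OF \<open>c \<in> {t0..t1}\<close> abs_cont_on_mult[OF ac ac compact_Icc] this]
  have "x t1 * x t1 \<le> 0" using \<open>x c = 0\<close> by simp
  then show ?thesis by (auto simp: mult_le_0_iff)
qed

section \<open>The adjoint of the SEIR model\<close>

definition seir_adjoint_ode_on ::
  "real set \<Rightarrow> real \<Rightarrow> (real \<Rightarrow> real) \<Rightarrow> (real \<Rightarrow> real) \<Rightarrow> (real \<Rightarrow> real) \<Rightarrow> (real \<Rightarrow> real) \<Rightarrow>
    (real \<Rightarrow> real) \<Rightarrow> (real \<Rightarrow> real) \<Rightarrow> (real \<Rightarrow> real) \<Rightarrow> bool"
where
  "seir_adjoint_ode_on D \<eta> \<beta> \<gamma> S I lam1 lam2 lam3 \<longleftrightarrow> (AE t in lebesgue. t \<in> D \<longrightarrow>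
     (lam1 has_real_derivative (\<beta> t * I t * lam1 t - \<beta> t * I t * lam2 t)) (at t within D) \<and>
     (lam2 has_real_derivative (\<eta> * lam2 t - \<eta> * lam3 t)) (at t within D) \<and>
     (lam3 has_real_derivative (\<beta> t * S t * lam1 t - \<beta> t * S t * lam2 t + \<gamma> t * lam3 t))
        (at t within D))"

lemma mult_le_sum_squares:
  fixes a x y M :: real
  assumes "\<bar>a\<bar> \<le> M"
  shows "2 * (a * x * y) \<le> M * (x * x) + M * (y * y)"
proof -
  have "2 * (a * x * y) \<le> \<bar>a\<bar> * (2 * \<bar>x\<bar> * \<bar>y\<bar>)" by (simp add: abs_mult[symmetric])
  also have "\<dots> \<le> \<bar>a\<bar> * (x * x + y * y)"
    using sum_squares_bound[of "\<bar>x\<bar>" "\<bar>y\<bar>"] by (intro mult_left_mono) (auto simp: abs_mult_self_eq power2_eq_square)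
  also have "\<dots> \<le> M * (x * x + y * y)" using assms by (intro mult_right_mono) auto
  finally show ?thesis by (simp add: distrib_left)
qed

lemma seir_adjoint_zero:
  assumes "c \<in> {t0..t1}"
    and ac: "abs_cont_on {t0..t1} lam1" "abs_cont_on {t0..t1} lam2" "abs_cont_on {t0..t1} lam3"
    and ode: "seir_adjoint_ode_on {t0..t1} \<eta> \<beta> \<gamma> S I lam1 lam2 lam3"
    and bounds: "\<bar>\<eta>\<bar> \<le> M" "\<And>t. t \<in> {t0..t1} \<Longrightarrow> \<bar>\<beta> t * I t\<bar> \<le> M"
      "\<And>t. t \<in> {t0..t1} \<Longrightarrow> \<bar>\<beta> t * S t\<bar> \<le> M" "\<And>t. t \<in> {t0..t1} \<Longrightarrow> \<bar>\<gamma> t\<bar> \<le> M"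
    and "lam1 c = 0" "lam2 c = 0" "lam3 c = 0"
  shows "lam1 t1 = 0 \<and> lam2 t1 = 0 \<and> lam3 t1 = 0"
proof -
  define V where "V t = lam1 t * lam1 t + lam2 t * lam2 t + lam3 t * lam3 t" for t
  define V' where "V' t = 2 * (lam1 t * (\<beta> t * I t * lam1 t - \<beta> t * I t * lam2 t)
    + lam2 t * (\<eta> * lam2 t - \<eta> * lam3 t)
    + lam3 t * (\<beta> t * S t * lam1 t - \<beta> t * S t * lam2 t + \<gamma> t * lam3 t))" for t
  have "V' t \<le> (5 * M) * V t" if "t \<in> {t0..t1}" for t
  proof -
    define p s g l1 l2 l3 where "p = \<beta> t * I t" and "s = \<beta> t * S t" and "g = \<gamma> t"
      and "l1 = lam1 t" and "l2 = lam2 t" and "l3 = lam3 t"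
    have "\<bar>p\<bar> \<le> M" "\<bar>- p\<bar> \<le> M" "\<bar>s\<bar> \<le> M" "\<bar>- s\<bar> \<le> M" "\<bar>g\<bar> \<le> M" "\<bar>- \<eta>\<bar> \<le> M"
      using bounds that by (simp_all add: p_def s_def g_def)
    have "M \<ge> 0" using bounds(1) by linarith
    then have "0 \<le> M * (l1 * l1)" "0 \<le> M * (l2 * l2)" "0 \<le> M * (l3 * l3)" by simp_all
    moreover have "V' t = 2 * (p * l1 * l1) + 2 * ((- p) * l1 * l2) + 2 * (\<eta> * l2 * l2)
        + 2 * ((- \<eta>) * l2 * l3) + 2 * (s * l3 * l1) + 2 * ((- s) * l3 * l2) + 2 * (g * l3 * l3)"
      by (simp add: V'_def p_def s_def g_def l1_def l2_def l3_def algebra_simps)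
    moreover have "(5 * M) * V t = 5 * (M * (l1 * l1)) + 5 * (M * (l2 * l2)) + 5 * (M * (l3 * l3))"
      by (simp add: V_def l1_def l2_def l3_def algebra_simps)
    ultimately show ?thesis
      using mult_le_sum_squares[OF \<open>\<bar>p\<bar> \<le> M\<close>, of l1 l1] mult_le_sum_squares[OF \<open>\<bar>- p\<bar> \<le> M\<close>, of l1 l2]
        mult_le_sum_squares[OF bounds(1), of l2 l2] mult_le_sum_squares[OF \<open>\<bar>- \<eta>\<bar> \<le> M\<close>, of l2 l3]
        mult_le_sum_squares[OF \<open>\<bar>s\<bar> \<le> M\<close>, of l3 l1] mult_le_sum_squares[OF \<open>\<bar>- s\<bar> \<le> M\<close>, of l3 l2]
        mult_le_sum_squares[OF \<open>\<bar>g\<bar> \<le> M\<close>, of l3 l3]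
      by linarith
  qed
  moreover have "AE t in lebesgue. t \<in> {t0..t1} \<longrightarrow> (V has_real_derivative V' t) (at t within {t0..t1})"
    using ode unfolding seir_adjoint_ode_on_def
  proof eventually_elim
    case (elim t)
    show ?case
    proof
      assume "t \<in> {t0..t1}"
      with elim have d: "(lam1 has_real_derivative (\<beta> t * I t * lam1 t - \<beta> t * I t * lam2 t)) (at t within {t0..t1})"
         "(lam2 has_real_derivative (\<eta> * lam2 t - \<eta> * lam3 t)) (at t within {t0..t1})"
         "(lam3 has_real_derivative (\<beta> t * S t * lam1 t - \<beta> t * S t * lam2 t + \<gamma> t * lam3 t))
            (at t within {t0..t1})" by auto
      show "(V has_real_derivative V' t) (at t within {t0..t1})"
        unfolding V_def V'_def
        by (rule DERIV_cong[OF DERIV_add[OF DERIV_add[OF DERIV_mult'[OF d(1) d(1)] DERIV_mult'[OF d(2) d(2)]]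
          DERIV_mult'[OF d(3) d(3)]]]) (simp add: algebra_simps)
    qed
  qed
  ultimately have deriv: "AE t in lebesgue. t \<in> {t0..t1} \<longrightarrow>
      (V has_real_derivative V' t) (at t within {t0..t1}) \<and> V' t \<le> (5 * M) * V t"
    by (auto elim: AE_mp)
  have "abs_cont_on {t0..t1} V"
    unfolding V_def by (intro abs_cont_on_add abs_cont_on_mult ac compact_Icc)
  from gronwall_zero[OF \<open>c \<in> {t0..t1}\<close> this deriv] have "V t1 \<le> 0"
    using \<open>lam1 c = 0\<close> \<open>lam2 c = 0\<close> \<open>lam3 c = 0\<close> by (simp add: V_def)
  then show ?thesis
    unfolding V_def by (smt (verit) zero_le_square mult_eq_0_iff)
qed

lemma singular_beta_arc_adjoint_zero:
  assumes sub: "{a<..<b} \<subseteq> {t0..t1}"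
    and ac: "abs_cont_on {t0..t1} lam1" and cont: "continuous_on {t0..t1} lam3"
    and ode: "seir_adjoint_ode_on {t0..t1} \<eta> \<beta> \<gamma> S I lam1 lam2 lam3"
    and "\<eta> \<noteq> 0" and \<gamma>_nonzero: "\<And>t. t \<in> {a<..<b} \<Longrightarrow> \<gamma> t \<noteq> 0"
    and singular: "\<And>t. t \<in> {a<..<b} \<Longrightarrow> lam2 t = lam1 t"
    and t: "t \<in> {a<..<b}"
  shows "lam1 t = 0 \<and> lam2 t = 0 \<and> lam3 t = 0"
proof -
  let ?U = "{a<..<b}"
  have ode_U: "AE s in lebesgue. s \<in> ?U \<longrightarrow>
     (lam1 has_real_derivative (\<beta> s * I s * lam1 s - \<beta> s * I s * lam2 s)) (at s within {t0..t1}) \<and>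
     (lam2 has_real_derivative (\<eta> * lam2 s - \<eta> * lam3 s)) (at s within {t0..t1}) \<and>
     (lam3 has_real_derivative (\<beta> s * S s * lam1 s - \<beta> s * S s * lam2 s + \<gamma> s * lam3 s))
        (at s within {t0..t1})"
    using ode unfolding seir_adjoint_ode_on_def by eventually_elim (use sub in auto)
  define C where "C = lam1 t"
  have lam1_C: "lam1 s = C" if "s \<in> ?U" for s
    unfolding C_def
  proof (rule abs_cont_on_deriv_zero_imp_eq[OF ac sub _ that t])
    show "AE s in lebesgue. s \<in> ?U \<longrightarrow> (lam1 has_real_derivative 0) (at s within {t0..t1})"
      using ode_U by eventually_elim (auto simp: singular)
  qed
  have lam2_C: "lam2 s = C" if "s \<in> ?U" for s
    using lam1_C singular that by simp
  have "AE s in lebesgue. s \<in> ?U \<longrightarrow> lam3 s = C"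
    using ode_U
  proof eventually_elim
    case (elim s)
    show ?case
    proof
      assume s: "s \<in> ?U"
      have "\<eta> * lam2 s - \<eta> * lam3 s = 0"
        by (rule has_real_derivative_locally_constant[where f = lam2, OF _ open_greaterThanLessThan s sub])
          (use elim s lam2_C in auto)
      then show "lam3 s = C" using \<open>\<eta> \<noteq> 0\<close> lam2_C[OF s] by simp
    qed
  qed
  then have lam3_C: "lam3 s = C" if "s \<in> ?U" for s
    using continuous_on_AE_eq_imp_eq[OF open_greaterThanLessThan continuous_on_subset[OF cont sub]
        continuous_on_const _ that] by blast
  have \<gamma>C: "AE s in lebesgue. s \<in> ?U \<longrightarrow> \<gamma> s * C = 0"
    using ode_U
  proof eventually_elim
    case (elim s)
    show ?case
    proof
      assume s: "s \<in> ?U"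
      have "\<beta> s * S s * lam1 s - \<beta> s * S s * lam2 s + \<gamma> s * lam3 s = 0"
        by (rule has_real_derivative_locally_constant[where f = lam3, OF _ open_greaterThanLessThan s sub])
          (use elim s lam3_C in auto)
      then show "\<gamma> s * C = 0" using lam1_C[OF s] lam2_C[OF s] lam3_C[OF s] by simp
    qed
  qed
  have "\<exists>s\<in>?U. \<gamma> s * C = 0"
    using t by (intro AE_lebesgue_open_imp_ex[OF open_greaterThanLessThan _ \<gamma>C]) auto
  then obtain s where "s \<in> ?U" "\<gamma> s * C = 0" ..
  then have "C = 0" using \<gamma>_nonzero by simp
  then show ?thesis using lam1_C[OF t] lam2_C[OF t] lam3_C[OF t] by simp
qed

lemma singular_gamma_arc_imp_singular_beta_arc:
  assumes "open U" "U \<subseteq> {t0..t1}"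
    and cont: "continuous_on {t0..t1} lam1" "continuous_on {t0..t1} lam2"
    and ode: "seir_adjoint_ode_on {t0..t1} \<eta> \<beta> \<gamma> S I lam1 lam2 lam3"
    and nonzero: "\<And>t. t \<in> U \<Longrightarrow> \<beta> t * S t \<noteq> 0"
    and singular: "\<And>t. t \<in> U \<Longrightarrow> lam3 t = 0"
    and "t \<in> U"
  shows "lam2 t = lam1 t"
proof (rule continuous_on_AE_eq_imp_eq[OF \<open>open U\<close> _ _ _ \<open>t \<in> U\<close>])
  show "continuous_on U lam2" "continuous_on U lam1"
    using continuous_on_subset cont \<open>U \<subseteq> {t0..t1}\<close> by blast+
  show "AE s in lebesgue. s \<in> U \<longrightarrow> lam2 s = lam1 s"
    using ode unfolding seir_adjoint_ode_on_def
  proof eventually_elim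
    case (elim s)
    show ?case
    proof
      assume s: "s \<in> U"
      have "\<beta> s * S s * lam1 s - \<beta> s * S s * lam2 s + \<gamma> s * lam3 s = 0"
        by (rule has_real_derivative_locally_constant[where f = lam3, OF _ \<open>open U\<close> s \<open>U \<subseteq> {t0..t1}\<close>])
          (use elim s \<open>U \<subseteq> {t0..t1}\<close> singular in auto)
      then have "\<beta> s * S s * (lam1 s - lam2 s) = 0"
        using singular[OF s] by (simp add: right_diff_distrib)
      then show "lam2 s = lam1 s" using nonzero[OF s] by simp
    qed
  qed
qed

lemma seir_coefficients_bounded:
  fixes \<beta> \<gamma> S I :: "real \<Rightarrow> real"
  assumes S: "continuous_on {t0..t1} S" and I: "continuous_on {t0..t1} I"
    and \<beta>: "\<And>t. t \<in> {t0..t1} \<Longrightarrow> \<bar>\<beta> t\<bar> \<le> B" and \<gamma>: "\<And>t. t \<in> {t0..t1} \<Longrightarrow> \<bar>\<gamma> t\<bar> \<le> B"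
  obtains M where "\<bar>\<eta>\<bar> \<le> M" "\<And>t. t \<in> {t0..t1} \<Longrightarrow> \<bar>\<beta> t * I t\<bar> \<le> M"
    "\<And>t. t \<in> {t0..t1} \<Longrightarrow> \<bar>\<beta> t * S t\<bar> \<le> M" "\<And>t. t \<in> {t0..t1} \<Longrightarrow> \<bar>\<gamma> t\<bar> \<le> M"
proof -
  obtain BS where "BS \<ge> 0" and BS: "\<And>t. t \<in> {t0..t1} \<Longrightarrow> \<bar>S t\<bar> \<le> BS"
    using continuous_on_compact_bound[OF compact_Icc S] by auto
  obtain BI where "BI \<ge> 0" and BI: "\<And>t. t \<in> {t0..t1} \<Longrightarrow> \<bar>I t\<bar> \<le> BI"
    using continuous_on_compact_bound[OF compact_Icc I] by auto
  define M where "M = \<bar>\<eta>\<bar> + \<bar>B\<bar> * (BS + BI) + \<bar>B\<bar>"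
  show thesis
  proof (rule that)
    show "\<bar>\<eta>\<bar> \<le> M" using \<open>BS \<ge> 0\<close> \<open>BI \<ge> 0\<close> by (simp add: M_def)
    fix t assume t: "t \<in> {t0..t1}"
    have "\<bar>\<beta> t\<bar> \<le> \<bar>B\<bar>" using \<beta>[OF t] by linarith
    then have "\<bar>\<beta> t\<bar> * \<bar>I t\<bar> \<le> \<bar>B\<bar> * BI" "\<bar>\<beta> t\<bar> * \<bar>S t\<bar> \<le> \<bar>B\<bar> * BS"
      using BI[OF t] BS[OF t] by (simp_all add: mult_mono)
    moreover have "0 \<le> \<bar>B\<bar> * BS" "0 \<le> \<bar>B\<bar> * BI" using \<open>BS \<ge> 0\<close> \<open>BI \<ge> 0\<close> by simp_all
    ultimately show "\<bar>\<beta> t * I t\<bar> \<le> M" "\<bar>\<beta> t * S t\<bar> \<le> M"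
      using abs_ge_zero[of \<eta>] abs_ge_zero[of B] unfolding M_def abs_mult distrib_left by linarith+
    show "\<bar>\<gamma> t\<bar> \<le> M" using \<gamma>[OF t] \<open>0 \<le> \<bar>B\<bar> * BS\<close> \<open>0 \<le> \<bar>B\<bar> * BI\<close>
      by (simp add: M_def distrib_left)
  qed
qed

lemma seir_susceptible_zero:
  assumes "c \<in> {t0..t1}" and "abs_cont_on {t0..t1} S"
    and "AE t in lebesgue. t \<in> {t0..t1} \<longrightarrow> (S has_real_derivative - \<beta> t * S t * I t) (at t within {t0..t1})"
    and bound: "\<And>t. t \<in> {t0..t1} \<Longrightarrow> \<bar>\<beta> t * I t\<bar> \<le> M"
    and "S c = 0"
  shows "S t1 = 0"
proof (rule abs_cont_on_linear_bound_zero[OF assms(1-3) _ \<open>S c = 0\<close>])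
  show "\<bar>- \<beta> t * S t * I t\<bar> \<le> M * \<bar>S t\<bar>" if "t \<in> {t0..t1}" for t
    using mult_right_mono[OF bound[OF that] abs_ge_zero[of "S t"]] by (simp add: abs_mult ac_simps)
qed

theorem proposition3:
  fixes \<eta> \<beta>min \<beta>max \<gamma>min \<gamma>max Imax t0 tbar :: real
    and \<beta> \<gamma> S E I lam1 lam2 lam3 :: "real \<Rightarrow> real"
  assumes params: "\<eta> > 0" "0 < \<beta>min" "\<beta>min \<le> \<beta>max" "0 < \<gamma>min" "\<gamma>min \<le> \<gamma>max"
      "0 < Imax" "Imax \<le> 1"
    and time: "t0 \<le> tbar"
    and inputs_meas: "\<beta> \<in> borel_measurable lebesgue" "\<gamma> \<in> borel_measurable lebesgue"
    and inputs_bds: "\<And>t. t \<ge> t0 \<Longrightarrow> \<beta> t \<in> {\<beta>min..\<beta>max}"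
      "\<And>t. t \<ge> t0 \<Longrightarrow> \<gamma> t \<in> {\<gamma>min..\<gamma>max}"
    and state_ac: "abs_cont_on {t0..tbar} S" "abs_cont_on {t0..tbar} E" "abs_cont_on {t0..tbar} I"
    and state_ode: "AE t in lebesgue. t \<in> {t0..tbar} \<longrightarrow>
         (S has_real_derivative (- \<beta> t * S t * I t)) (at t within {t0..tbar}) \<and>
         (E has_real_derivative (\<beta> t * S t * I t - \<eta> * E t)) (at t within {t0..tbar}) \<and>
         (I has_real_derivative (\<eta> * E t - \<gamma> t * I t)) (at t within {t0..tbar})"
    and constraint: "\<And>t. t \<in> {t0..tbar} \<Longrightarrow> I t - Imax \<le> 0"
    and adj_ac: "abs_cont_on {t0..tbar} lam1" "abs_cont_on {t0..tbar} lam2" "abs_cont_on {t0..tbar} lam3"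
    and adj_ode: "AE t in lebesgue. t \<in> {t0..tbar} \<longrightarrow>
         (lam1 has_real_derivative (\<beta> t * I t * lam1 t - \<beta> t * I t * lam2 t)) (at t within {t0..tbar}) \<and>
         (lam2 has_real_derivative (\<eta> * lam2 t - \<eta> * lam3 t)) (at t within {t0..tbar}) \<and>
         (lam3 has_real_derivative (\<beta> t * S t * lam1 t - \<beta> t * S t * lam2 t + \<gamma> t * lam3 t))
            (at t within {t0..tbar})"
    and adj_nonzero: "\<exists>t\<in>{t0..tbar}. (lam1 t, lam2 t, lam3 t) \<noteq> (0, 0, 0)"
    and adj_final: "lam1 tbar = 0" "lam2 tbar = 0" "lam3 tbar = 1"
    and beta_rule: "AE t in lebesgue. t \<in> {t0..tbar} \<longrightarrow>
         (lam2 t - lam1 t < 0 \<longrightarrow> \<beta> t = \<beta>max) \<and> (lam2 t - lam1 t > 0 \<longrightarrow> \<beta> t = \<beta>min)"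
    and gamma_rule: "AE t in lebesgue. t \<in> {t0..tbar} \<longrightarrow>
         (lam3 t > 0 \<longrightarrow> \<gamma> t = \<gamma>max) \<and> (lam3 t < 0 \<longrightarrow> \<gamma> t = \<gamma>min)"
    and endpoint: "(S tbar, E tbar, I tbar) \<in> tangent_set \<eta> \<gamma>max Imax"
    and z1_nonzero: "S tbar \<noteq> 0"
  shows "\<forall>a b. a < b \<and> {a<..<b} \<subseteq> {t0..tbar} \<longrightarrow>
           (\<exists>t\<in>{a<..<b}. lam2 t - lam1 t \<noteq> 0) \<and> (\<exists>t\<in>{a<..<b}. lam3 t \<noteq> 0)"
proof -
  let ?D = "{t0..tbar}"
  have adj: "seir_adjoint_ode_on ?D \<eta> \<beta> \<gamma> S I lam1 lam2 lam3"
    using adj_ode unfolding seir_adjoint_ode_on_def .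
  have cont: "continuous_on ?D S" "continuous_on ?D I" "continuous_on ?D lam1"
      "continuous_on ?D lam2" "continuous_on ?D lam3"
    using state_ac adj_ac by (auto intro: abs_cont_on_imp_continuous_on)
  have \<beta>_pos: "\<beta> t > 0" and \<gamma>_pos: "\<gamma> t > 0" and "\<bar>\<beta> t\<bar> \<le> \<beta>max + \<gamma>max" "\<bar>\<gamma> t\<bar> \<le> \<beta>max + \<gamma>max"
    if "t \<in> ?D" for t
    using inputs_bds[of t] params that by auto
  then obtain M where bounds: "\<bar>\<eta>\<bar> \<le> M" "\<And>t. t \<in> ?D \<Longrightarrow> \<bar>\<beta> t * I t\<bar> \<le> M"
      "\<And>t. t \<in> ?D \<Longrightarrow> \<bar>\<beta> t * S t\<bar> \<le> M" "\<And>t. t \<in> ?D \<Longrightarrow> \<bar>\<gamma> t\<bar> \<le> M"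
    using seir_coefficients_bounded[OF cont(1,2)] by metis
  have S_nonzero: "S t \<noteq> 0" if "t \<in> ?D" for t
  proof
    assume "S t = 0"
    have "AE s in lebesgue. s \<in> ?D \<longrightarrow> (S has_real_derivative - \<beta> s * S s * I s) (at s within ?D)"
      using state_ode by eventually_elim auto
    then have "S tbar = 0"
      by (rule seir_susceptible_zero[OF that state_ac(1) _ _ \<open>S t = 0\<close>]) (rule bounds(2))
    with z1_nonzero show False ..
  qed
  have adjoint_nonzero: "\<not> (lam1 t = 0 \<and> lam2 t = 0 \<and> lam3 t = 0)" if "t \<in> ?D" for t
    using seir_adjoint_zero[OF that adj_ac adj bounds] adj_final by auto
  have beta_arc: "\<not> (\<forall>t\<in>{a<..<b}. lam2 t = lam1 t)" if ab: "a < b" "{a<..<b} \<subseteq> ?D" for a b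
  proof
    assume singular: "\<forall>t\<in>{a<..<b}. lam2 t = lam1 t"
    have m: "(a + b) / 2 \<in> {a<..<b}" using ab(1) by simp
    have "lam1 ((a + b) / 2) = 0 \<and> lam2 ((a + b) / 2) = 0 \<and> lam3 ((a + b) / 2) = 0"
    proof (rule singular_beta_arc_adjoint_zero[OF ab(2) adj_ac(1) cont(5) adj _ _ _ m])
      show "\<eta> \<noteq> 0" using params(1) by simp
      show "\<gamma> t \<noteq> 0" if "t \<in> {a<..<b}" for t using \<gamma>_pos ab(2) that by force
      show "lam2 t = lam1 t" if "t \<in> {a<..<b}" for t using singular that by blast
    qed
    with adjoint_nonzero m ab(2) show False by blast
  qed
  show ?thesis
  proof (intro allI impI conjI)
    fix a b assume ab: "a < b \<and> {a<..<b} \<subseteq> ?D"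
    then show "\<exists>t\<in>{a<..<b}. lam2 t - lam1 t \<noteq> 0" using beta_arc by auto
    show "\<exists>t\<in>{a<..<b}. lam3 t \<noteq> 0"
      using singular_gamma_arc_imp_singular_beta_arc[OF open_greaterThanLessThan _ cont(3,4) adj]
        beta_arc ab \<beta>_pos S_nonzero by (metis less_irrefl mult_eq_0_iff subsetD)
  qed
qed

end
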